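(* Let $\{\mathcal{T}^\pi\}_{\pi\in\Pi}$ be a consistency operator, i.e. a family of maps $\mathcal{T}^\pi:\mathbb{R}^{\mathcal{S}}\to\mathbb{R}^{\mathcal{S}}$ indexed by policies $\pi\in\Pi$. (i) If $\mathcal{T}^\pi$ is linear, then it enables the greedy policy. (ii) If $\mathcal{T}^\pi$ enables the greedy policy, then there exists a linear consistency operator $\mathcal{T}^\pi_{\mathrm{linear}}$ such that for all $v\in\mathbb{R}^{\mathcal{S}}$ and $s\in\mathcal{S}$, $\max_{\pi\in\Pi}[\mathcal{T}^\pi v](s) = \max_{\pi\in\Pi}[\mathcal{T}^\pi_{\mathrm{linear}} v](s)$.
   Context: $\mathcal{S},\mathcal{A}$ are finite sets and $\Pi = \Delta(\mathcal{A})^{\mathcal{S}}$ is the set of all stationary (stochastic and deterministic) policies, a policy being $\pi\in\mathbb{R}^{\mathcal{S}\times\mathcal{A}}$ with $\pi[s,\cdot]\in\Delta(\mathcal{A})$ for each $s$. A consistency operator $\mathcal{T}^\pi$ enables the greedy policy if there is a function $g:\mathbb{R}^{\mathcal{S}}\times\mathcal{A}\to\mathbb{R}^{\mathcal{S}}$ such that for all $v\in\mathbb{R}^{\mathcal{S}}$ and $s\in\mathcal{S}$, $\max_{a\in\mathcal{A}} g(v,a)[s] = \max_{\pi\in\Pi}[\mathcal{T}^\pi v](s)$. It is linear if there is a function $f:\mathbb{R}^{\mathcal{S}}\to\mathbb{R}^{\mathcal{S}\times\mathcal{A}}$, independent of $\pi$, such that for all $\pi\in\Pi$, $v\in\mathbb{R}^{\mathcal{S}}$,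 $s\in\mathcal{S}$: $[\mathcal{T}^\pi v](s) = \langle \pi[s,\cdot], f(v)[s,\cdot]\rangle$. *)

theory Defs
  imports "HOL-Analysis.Analysis"
begin

definition policies :: "('s::finite \<Rightarrow> 'a::finite \<Rightarrow> real) set" where
  "policies = {pi. \<forall>s. (\<forall>a. 0 \<le> pi s a) \<and> (\<Sum>a\<in>UNIV. pi s a) = 1}"

type_synonym ('s, 'a) cons_op = "('s \<Rightarrow> 'a \<Rightarrow> real) \<Rightarrow> ('s \<Rightarrow> real) \<Rightarrow> ('s \<Rightarrow> real)"

definition is_max :: "real \<Rightarrow> real set \<Rightarrow> bool" where
  "is_max m X \<longleftrightarrow> m \<in> X \<and> (\<forall>x\<in>X. x \<le> m)"

definition max_pol :: "('s::finite, 'a::finite) cons_op \<Rightarrow> ('s \<Rightarrow> real) \<Rightarrow> 's \<Rightarrow> real \<Rightarrow> bool" where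
  "max_pol T v s m \<longleftrightarrow> is_max m ((\<lambda>pi. T pi v s) ` policies)"

definition enables_greedy :: "('s::finite, 'a::finite) cons_op \<Rightarrow> bool" where
  "enables_greedy T \<longleftrightarrow>
     (\<exists>g :: ('s \<Rightarrow> real) \<Rightarrow> 'a \<Rightarrow> ('s \<Rightarrow> real).
        \<forall>v s. max_pol T v s (Max (range (\<lambda>a. g v a s))))"

definition linear_op :: "('s::finite, 'a::finite) cons_op \<Rightarrow> bool" where
  "linear_op T \<longleftrightarrow>
     (\<exists>f :: ('s \<Rightarrow> real) \<Rightarrow> ('s \<Rightarrow> 'a \<Rightarrow> real).
        \<forall>pi\<in>policies. \<forall>v s. T pi v s = (\<Sum>a\<in>UNIV. pi s a * f v s a))"

end

theory Submission
  imports Defs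
begin

text \<open>A linear function of the row pi s over the probability simplex attains its maximum at a
  vertex, i.e. at a deterministic policy. So for a linear operator the maximum over policies is
  the maximum over actions of f v s a, which is therefore a greedy g v a s. Conversely, a greedy g
  defines the linear operator with f v s a = g v a s, and by the same fact its maximum over
  policies is the maximum over actions of g v a s.\<close>

lemma convex_combination_le_Max:
  fixes p h :: "'a::finite \<Rightarrow> real"
  assumes "\<And>a. 0 \<le> p a" and "(\<Sum>a\<in>UNIV. p a) = 1"
  shows "(\<Sum>a\<in>UNIV. p a * h a) \<le> Max (range h)"
proof -
  have "(\<Sum>a\<in>UNIV. p a * h a) \<le> (\<Sum>a\<in>UNIV. p a * Max (range h))"
    by (intro sum_mono mult_left_mono) (simp_all add: assms)
  also have "\<dots> = Max (range h)"
    using assms(2) by (simp add: sum_distrib_right[symmetric])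
  finally show ?thesis .
qed

lemma deterministic_policy_in_policies:
  fixes d :: "'s::finite \<Rightarrow> 'a::finite"
  shows "(\<lambda>s a. if a = d s then 1 else 0) \<in> policies"
  unfolding policies_def by simp

lemma is_max_policy_average:
  fixes h :: "'a::finite \<Rightarrow> real" and s :: "'s::finite"
  shows "is_max (Max (range h)) ((\<lambda>pi::'s \<Rightarrow> 'a \<Rightarrow> real. \<Sum>a\<in>UNIV. pi s a * h a) ` policies)"
proof -
  have "Max (range h) \<in> range h" by (rule Max_in) auto
  then obtain a0 where a0: "h a0 = Max (range h)" by (metis imageE)
  let ?pi0 = "\<lambda>(s::'s) a. if a = a0 then 1 else (0::real)"
  have "?pi0 \<in> policies"
    using deterministic_policy_in_policies[where d = "\<lambda>_. a0"] by simp
  moreover have "Max (range h) = (\<Sum>a\<in>UNIV. ?pi0 s a * h a)"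
    using a0 by (simp add: of_bool_def[symmetric])
  ultimately have "Max (range h) \<in> (\<lambda>pi. \<Sum>a\<in>UNIV. pi s a * h a) ` policies"
    by (rule image_eqI[where x = ?pi0, rotated])
  moreover have "(\<Sum>a\<in>UNIV. pi s a * h a) \<le> Max (range h)" if "pi \<in> policies" for pi
    using that unfolding policies_def by (auto intro: convex_combination_le_Max)
  ultimately show ?thesis
    unfolding is_max_def by blast
qed

definition linear_cons_op :: "(('s \<Rightarrow> real) \<Rightarrow> 's \<Rightarrow> 'a \<Rightarrow> real) \<Rightarrow> ('s, 'a) cons_op" where
  "linear_cons_op f = (\<lambda>pi v s. \<Sum>a\<in>UNIV. pi s a * f v s a)"

lemma linear_op_linear_cons_op: "linear_op (linear_cons_op f)"
  unfolding linear_op_def linear_cons_op_def by blast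

lemma linear_op_iff: "linear_op T \<longleftrightarrow> (\<exists>f. \<forall>pi\<in>policies. T pi = linear_cons_op f pi)"
  unfolding linear_op_def linear_cons_op_def fun_eq_iff by blast

lemma max_pol_linear_cons_op: "max_pol (linear_cons_op f) v s (Max (range (f v s)))"
  unfolding max_pol_def linear_cons_op_def by (rule is_max_policy_average)

lemma max_pol_cong:
  assumes "\<forall>pi\<in>policies. T pi = T' pi"
  shows "max_pol T = max_pol T'"
proof -
  have "(\<lambda>pi. T pi v s) ` policies = (\<lambda>pi. T' pi v s) ` policies" for v s
    using assms by (auto intro!: image_cong)
  then show ?thesis
    unfolding max_pol_def by (intro ext) simp
qed

theorem lemma1:
  fixes T :: "('s::finite, 'a::finite) cons_op"
  shows "(linear_op T \<longrightarrow> enables_greedy T)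
       \<and> (enables_greedy T \<longrightarrow>
            (\<exists>T_lin :: ('s, 'a) cons_op. linear_op T_lin \<and>
               (\<forall>v s. \<exists>m. max_pol T v s m \<and> max_pol T_lin v s m)))"
proof (intro conjI impI)
  assume "linear_op T"
  then obtain f where "\<forall>pi\<in>policies. T pi = linear_cons_op f pi"
    unfolding linear_op_iff by blast
  then have "max_pol T = max_pol (linear_cons_op f)"
    by (rule max_pol_cong)
  then have "max_pol T v s (Max (range (f v s)))" for v s
    using max_pol_linear_cons_op by simp
  then show "enables_greedy T"
    unfolding enables_greedy_def by (intro exI[where x = "\<lambda>v a s. f v s a"]) simp
next
  assume "enables_greedy T"
  then obtain g :: "('s \<Rightarrow> real) \<Rightarrow> 'a \<Rightarrow> 's \<Rightarrow> real"
    where g: "\<And>v s. max_pol T v s (Max (range (\<lambda>a. g v a s)))"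
    unfolding enables_greedy_def by blast
  let ?T_lin = "linear_cons_op (\<lambda>v s a. g v a s)"
  have "max_pol ?T_lin v s (Max (range (\<lambda>a. g v a s)))" for v s
    using max_pol_linear_cons_op[of "\<lambda>v s a. g v a s"] by simp
  then show "\<exists>T_lin :: ('s, 'a) cons_op. linear_op T_lin \<and>
               (\<forall>v s. \<exists>m. max_pol T v s m \<and> max_pol T_lin v s m)"
    using g linear_op_linear_cons_op by blast
qed

end
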